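(* Let $n\geq 3$. There is no u-p-word for $n$-permutations of the form $u=\Diamond u_2u_3\cdots u_N$ containing exactly one $\Diamond$ (that is, with $u_2,\ldots,u_N$ all integers).
   Context: An $n$-permutation is a permutation of $\{1,\ldots,n\}$. For a word $w$ of distinct numbers, $\mathrm{red}(w)$ is obtained by replacing the $i$-th smallest letter by $i$. Let $\Diamond$ be a symbol not among the integers. A word $f=f_1\cdots f_n$ over the positive integers together with $\Diamond$, whose integer letters are pairwise distinct, covers an $n$-permutation $\pi$ if one can substitute real numbers for the occurrences of $\Diamond$ (independently) so that the resulting word has $n$ pairwise distinct entries and reduces to $\pi$; equivalently, $f_i<f_j\iff\pi_i<\pi_j$ for all positions $i,j$ holding integers. A u-p-word for $n$-permutations is a word $u_1\cdots u_N$, $N\geq n$, over this alphabet containing at least one $\Diamond$, such that every factor $u_i\cdots u_{i+n-1}$ ($1\leq i\leq N-n+1$) has pairwise distinct integer letters and every $n$-permutation is covered by exactly one of these factors. *)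

theory Defs
  imports Complex_Main
begin

text \<open>Letters: \<open>None\<close> is the diamond symbol, \<open>Some k\<close> is the positive integer k (k \<ge> 1).
Words and permutations are lists; positions are 0-based.\<close>

type_synonym letter = "nat option"

definition is_perm :: "nat \<Rightarrow> nat list \<Rightarrow> bool" where
  "is_perm n p \<longleftrightarrow> length p = n \<and> distinct p \<and> set p = {1..n}"

definition int_letters_distinct :: "letter list \<Rightarrow> bool" where
  "int_letters_distinct w \<longleftrightarrow> distinct (filter (\<lambda>x. x \<noteq> None) w)"

definition covers :: "letter list \<Rightarrow> nat list \<Rightarrow> bool" where
  "covers f p \<longleftrightarrow> length f = length p \<and>
     (\<exists>r :: real list. length r = length f \<and> distinct r \<and>
        (\<forall>i < length f. \<forall>a. f ! i = Some a \<longrightarrow> r ! i = real a) \<and>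
        (\<forall>i < length f. \<forall>j < length f. r ! i < r ! j \<longleftrightarrow> p ! i < p ! j))"

definition factor :: "letter list \<Rightarrow> nat \<Rightarrow> nat \<Rightarrow> letter list" where
  "factor u i n = take n (drop i u)"

definition upword :: "nat \<Rightarrow> letter list \<Rightarrow> bool" where
  "upword n u \<longleftrightarrow> length u \<ge> n \<and> None \<in> set u \<and> Some 0 \<notin> set u \<and>
     (\<forall>i \<le> length u - n. int_letters_distinct (factor u i n)) \<and>
     (\<forall>p. is_perm n p \<longrightarrow> (\<exists>!i. i \<le> length u - n \<and> covers (factor u i n) p))"

end

theory Submission
  imports Defs
begin

text \<open>The first factor covers exactly the
permutations whose entries \<open>2, \<dots>, n\<close> are order-isomorphic to \<open>u\<^sub>2\<cdots>u\<^sub>n\<close>; every other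
factor consists of integers only and covers a single permutation. Hence no later factor can
end in a copy of the pattern of \<open>u\<^sub>2\<cdots>u\<^sub>n\<close>, for the permutation it covers would be
covered twice. Now take a permutation whose first \<open>n - 1\<close> entries follow the pattern of
\<open>u\<^sub>2\<cdots>u\<^sub>n\<close> and whose last two entries are ordered unlike \<open>u\<^sub>{n-1}u\<^sub>n\<close>: the first factor
does not cover it, and by the previous remark only the factor \<open>u\<^sub>2\<cdots>u\<^sub>{n+1}\<close> can. For
\<open>n \<ge> 3\<close> there are two such permutations, differing in the relative order of their entries
\<open>n - 2\<close> and \<open>n\<close>, but the all-integer factor \<open>u\<^sub>2\<cdots>u\<^sub>{n+1}\<close> covers only one of them.\<close>

lemma exists_between_finite:
  fixes A B :: "'a::{dense_linorder,no_top,no_bot} set"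
  assumes "finite A" "finite B" "\<forall>a\<in>A. \<forall>b\<in>B. a < b"
  shows "\<exists>x. (\<forall>a\<in>A. a < x) \<and> (\<forall>b\<in>B. x < b)"
proof (cases "A = {}"; cases "B = {}")
  assume "A \<noteq> {}" "B \<noteq> {}"
  then have "Max A < Min B" using assms by simp
  then obtain x where x: "Max A < x" "x < Min B" using dense by blast
  have "\<forall>a\<in>A. a < x" using x(1) Max_ge[OF assms(1)] by (auto intro: le_less_trans)
  moreover have "\<forall>b\<in>B. x < b" using x(2) Min_le[OF assms(2)] by (auto intro: less_le_trans)
  ultimately show ?thesis by blast
next
  assume "A \<noteq> {}" "B = {}"
  obtain x where "Max A < x" using gt_ex by blast
  then have "\<forall>a\<in>A. a < x" using Max_ge[OF assms(1)] by (auto intro: le_less_trans)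
  then show ?thesis using \<open>B = {}\<close> by blast
next
  assume "A = {}" "B \<noteq> {}"
  obtain x where "x < Min B" using lt_ex by blast
  then have "\<forall>b\<in>B. x < b" using Min_le[OF assms(2)] by (auto intro: less_le_trans)
  then show ?thesis using \<open>A = {}\<close> by blast
qed simp

lemma exists_gap_below:
  fixes a :: "'a::{dense_linorder,no_top,no_bot}"
  assumes "finite S"
  shows "\<exists>x<a. x \<notin> S \<and> (\<forall>s\<in>S. s < a \<longrightarrow> s < x)"
proof -
  have "finite {s\<in>S. s < a}" using assms by simp
  then obtain x where x: "\<forall>s\<in>{s\<in>S. s < a}. s < x" "\<forall>b\<in>{a}. x < b"
    using exists_between_finite[of "{s\<in>S. s < a}" "{a}"] by blast
  then show ?thesis by fastforce
qed

lemma exists_gap_above: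
  fixes a :: "'a::{dense_linorder,no_top,no_bot}"
  assumes "finite S"
  shows "\<exists>x>a. x \<notin> S \<and> (\<forall>s\<in>S. a < s \<longrightarrow> x < s)"
proof -
  have "finite {s\<in>S. a < s}" using assms by simp
  then obtain x where x: "\<forall>b\<in>{a}. b < x" "\<forall>s\<in>{s\<in>S. a < s}. x < s"
    using exists_between_finite[of "{a}" "{s\<in>S. a < s}"] by blast
  then show ?thesis by fastforce
qed

lemma exists_perm_order_iso:
  fixes h :: "nat \<Rightarrow> 'a::linorder"
  assumes inj: "inj_on h {..<n}"
  shows "\<exists>q. is_perm n q \<and> (\<forall>j<n. \<forall>k<n. q!j < q!k \<longleftrightarrow> h j < h k)"
proof -
  define rank where "rank j = card {k\<in>{..<n}. h k < h j} + 1" for j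
  have rank_mono: "rank j < rank k" if "h j < h k" "j < n" for j k
  proof -
    have "{m\<in>{..<n}. h m < h j} \<subset> {m\<in>{..<n}. h m < h k}"
      using that by (auto dest: less_trans)
    then show ?thesis unfolding rank_def by (simp add: psubset_card_mono)
  qed
  have rank_less_iff: "rank j < rank k \<longleftrightarrow> h j < h k" if "j < n" "k < n" for j k
  proof
    assume "rank j < rank k"
    then have "h j \<noteq> h k" using inj_onD[OF inj, of j k] that by auto
    moreover have "\<not> h k < h j" using rank_mono[of k j] that \<open>rank j < rank k\<close> by auto
    ultimately show "h j < h k" by simp
  qed (use rank_mono that in blast)
  have rank_range: "rank j \<in> {1..n}" if "j < n" for j
  proof -
    have "card {k\<in>{..<n}. h k < h j} \<le> card ({..<n} - {j})"
      by (rule card_mono) auto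
    then show ?thesis unfolding rank_def using that by simp
  qed
  have "inj_on rank {0..<n}"
  proof (rule inj_onI)
    fix j k assume "j \<in> {0..<n}" "k \<in> {0..<n}" "rank j = rank k"
    then have "h j = h k" using rank_less_iff[of j k] rank_less_iff[of k j] by auto
    then show "j = k" using inj_onD[OF inj] \<open>j \<in> {0..<n}\<close> \<open>k \<in> {0..<n}\<close> by auto
  qed
  define q where "q = map rank [0..<n]"
  have "distinct q" "length q = n"
    unfolding q_def using \<open>inj_on rank {0..<n}\<close> by (simp_all add: distinct_map)
  moreover have "set q = {1..n}"
  proof (rule card_subset_eq)
    show "set q \<subseteq> {1..n}" unfolding q_def using rank_range by auto
    show "card (set q) = card {1..n}" using \<open>distinct q\<close> \<open>length q = n\<close> by (simp add: distinct_card)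
  qed simp
  moreover have "\<forall>j<n. \<forall>k<n. q!j < q!k \<longleftrightarrow> h j < h k"
    unfolding q_def using rank_less_iff by simp
  ultimately show ?thesis unfolding is_perm_def by blast
qed

lemma covers_less_iff:
  assumes "covers f p" "j < length f" "k < length f" "f!j = Some a" "f!k = Some b"
  shows "p!j < p!k \<longleftrightarrow> a < b"
proof -
  obtain r :: "real list" where
    r_int: "\<forall>i < length f. \<forall>a. f ! i = Some a \<longrightarrow> r ! i = real a" and
    r_iso: "\<forall>i < length f. \<forall>j < length f. r ! i < r ! j \<longleftrightarrow> p ! i < p ! j"
    using assms(1) unfolding covers_def by blast
  have "r ! j = real a" "r ! k = real b" using r_int assms(2-) by auto
  moreover have "p ! j < p ! k \<longleftrightarrow> r ! j < r ! k" using r_iso assms(2,3) by simp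
  ultimately show ?thesis by simp
qed

lemma coversI:
  fixes r :: "nat \<Rightarrow> real"
  assumes "length f = length p" "distinct p"
    and "\<forall>i<length p. \<forall>a. f!i = Some a \<longrightarrow> r i = real a"
    and "\<forall>i<length p. \<forall>j<length p. r i < r j \<longleftrightarrow> p!i < p!j"
  shows "covers f p"
proof -
  have "inj_on r {..<length p}"
  proof (rule inj_onI)
    fix i j assume "i \<in> {..<length p}" "j \<in> {..<length p}" "r i = r j"
    then have "p ! i = p ! j" using assms(4) by (metis lessThan_iff less_irrefl linorder_neqE)
    then show "i = j" using assms(2) \<open>i \<in> {..<length p}\<close> \<open>j \<in> {..<length p}\<close>
      by (simp add: nth_eq_iff_index_eq)
  qed
  then show ?thesis
    unfolding covers_def using assms(1,3,4)
    by (intro conjI exI[of _ "map r [0..<length p]"]) (auto simp: distinct_map atLeast0LessThan)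
qed

lemma extend_order_iso_at_zero:
  fixes g :: "nat \<Rightarrow> 'a::{dense_linorder,no_top,no_bot}" and h :: "nat \<Rightarrow> 'b::linorder"
  assumes inj: "inj_on h {..<n}"
    and iso: "\<forall>j\<in>{1..<n}. \<forall>k\<in>{1..<n}. g j < g k \<longleftrightarrow> h j < h k"
  shows "\<exists>x. \<forall>j<n. \<forall>k<n. (g(0:=x)) j < (g(0:=x)) k \<longleftrightarrow> h j < h k"
proof -
  let ?below = "g ` {j\<in>{1..<n}. h j < h 0}" and ?above = "g ` {j\<in>{1..<n}. h 0 < h j}"
  have fin: "finite ?below" "finite ?above" by (rule finite_imageI, simp)+
  have separated: "\<forall>a\<in>?below. \<forall>b\<in>?above. a < b"
  proof (intro ballI)
    fix a b assume "a \<in> ?below" "b \<in> ?above"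
    then obtain j k where jk: "a = g j" "b = g k" "j \<in> {1..<n}" "k \<in> {1..<n}"
      and "h j < h 0" "h 0 < h k"
      by blast
    from \<open>h j < h 0\<close> \<open>h 0 < h k\<close> have "h j < h k" by (rule less_trans)
    then show "a < b" using iso[rule_format, OF jk(3,4)] jk(1,2) by simp
  qed
  obtain x where x: "\<forall>a\<in>?below. a < x" "\<forall>b\<in>?above. x < b"
    using exists_between_finite[OF fin separated] by blast
  have below: "g j < x" if "j \<in> {1..<n}" "h j < h 0" for j
    using x(1) that by blast
  have above: "x < g j" if "j \<in> {1..<n}" "h 0 < h j" for j
    using x(2) that by blast
  have x_iso: "(g j < x \<longleftrightarrow> h j < h 0) \<and> (x < g j \<longleftrightarrow> h 0 < h j)" if "j \<in> {1..<n}" for j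
  proof -
    have "h j \<noteq> h 0" using inj_onD[OF inj, of j 0] that by auto
    then consider "h j < h 0" | "h 0 < h j" by fastforce
    then show ?thesis using below[OF that] above[OF that] by cases auto
  qed
  have "(g(0:=x)) j < (g(0:=x)) k \<longleftrightarrow> h j < h k" if "j < n" "k < n" for j k
    using x_iso[of j] x_iso[of k] iso that by (cases "j = 0"; cases "k = 0") auto
  then show ?thesis by blast
qed

lemma nth_neq_if_distinct_filter:
  assumes "distinct (filter P xs)" "j < length xs" "k < length xs" "j \<noteq> k" "P (xs!j)" "P (xs!k)"
  shows "xs!j \<noteq> xs!k"
  using assms
proof (induction xs arbitrary: j k)
  case (Cons y ys)
  then show ?case
    by (cases j; cases k) (auto simp: nth_Cons' split: if_splits)
qed simp

locale diamond_headed_upword =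
  fixes n :: nat and u :: "letter list"
  assumes upword: "upword n u"
    and nonempty: "u \<noteq> []"
    and hd_diamond: "hd u = None"
    and tl_integers: "\<forall>x \<in> set (tl u). x \<noteq> None"
begin

text \<open>Positions are 0-based, so \<open>u\<^sub>k\<close> of the paper is \<open>u ! (k - 1)\<close>; \<open>val 0\<close> is a junk value
  since position 0 holds the diamond.\<close>

definition val :: "nat \<Rightarrow> real" where
  "val j = real (the (u ! j))"

lemma length_ge: "n \<le> length u"
  using upword unfolding upword_def by simp

lemma nth_zero: "u ! 0 = None"
  using nonempty hd_diamond by (simp add: hd_conv_nth)

lemma nth_eq_Some:
  assumes "1 \<le> j" "j < length u"
  shows "u ! j = Some (the (u ! j))"
proof -
  have "tl u ! (j - 1) \<in> set (tl u)" using assms by (simp add: nth_mem)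
  moreover have "tl u ! (j - 1) = u ! j" using assms by (simp add: nth_tl)
  ultimately show ?thesis using tl_integers by auto
qed

lemma factor_nth: "i + n \<le> length u \<Longrightarrow> j < n \<Longrightarrow> factor u i n ! j = u ! (i + j)"
  by (simp add: factor_def)

lemma length_factor: "i + n \<le> length u \<Longrightarrow> length (factor u i n) = n"
  by (simp add: factor_def)

lemma inj_on_val:
  assumes "i + n \<le> length u"
  shows "inj_on val ({i..<i + n} - {0})"
proof (rule inj_onI)
  fix j k assume j: "j \<in> {i..<i + n} - {0}" and k: "k \<in> {i..<i + n} - {0}" and "val j = val k"
  have bounds: "1 \<le> j" "j < length u" "1 \<le> k" "k < length u" using j k assms by auto
  then have "u ! j = u ! k"
    using \<open>val j = val k\<close> nth_eq_Some[of j] nth_eq_Some[of k] unfolding val_def by (metis of_nat_eq_iff)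
  show "j = k"
  proof (rule ccontr)
    assume "j \<noteq> k"
    have "int_letters_distinct (factor u i n)"
      using upword assms unfolding upword_def by simp
    then have "factor u i n ! (j - i) \<noteq> factor u i n ! (k - i)"
      using \<open>j \<noteq> k\<close> j k assms bounds nth_eq_Some[of j] nth_eq_Some[of k]
      by (intro nth_neq_if_distinct_filter[where P = "\<lambda>x. x \<noteq> None"])
         (auto simp: int_letters_distinct_def length_factor factor_nth)
    moreover have "j - i < n" "k - i < n" using j k by auto
    ultimately show False
      using \<open>u ! j = u ! k\<close> factor_nth[OF assms, of "j - i"] factor_nth[OF assms, of "k - i"] j k
      by simp
  qed
qed

lemma inj_on_val_first: "inj_on val {1..<n}"
proof -
  have "{0..<0 + n} - {0} = {1..<n}" by auto
  then show ?thesis using inj_on_val[of 0] length_ge by simp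
qed

lemma covers_factor_less_iff:
  assumes "covers (factor u i n) p" "i + n \<le> length u" "j < n" "k < n" "1 \<le> i + j" "1 \<le> i + k"
  shows "p ! j < p ! k \<longleftrightarrow> val (i + j) < val (i + k)"
proof -
  have "factor u i n ! j = Some (the (u ! (i + j)))" "factor u i n ! k = Some (the (u ! (i + k)))"
    using assms(2-) nth_eq_Some by (simp_all add: factor_nth)
  then show ?thesis
    using covers_less_iff[OF assms(1)] assms(2-4) by (simp add: length_factor val_def)
qed

lemma ex1_covering_factor:
  assumes "is_perm n p"
  shows "\<exists>!i. i + n \<le> length u \<and> covers (factor u i n) p"
proof -
  have "i \<le> length u - n \<longleftrightarrow> i + n \<le> length u" for i
    using length_ge by linarith
  then show ?thesis using upword assms unfolding upword_def by simp
qed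

lemma covering_factor_unique:
  assumes "is_perm n p" "i + n \<le> length u" "covers (factor u i n) p"
    "i' + n \<le> length u" "covers (factor u i' n) p"
  shows "i = i'"
  using ex1_covering_factor[OF assms(1)] assms(2-) by blast

lemma first_factor_covers:
  assumes q: "is_perm n q" and iso: "\<forall>j\<in>{1..<n}. \<forall>k\<in>{1..<n}. val j < val k \<longleftrightarrow> q ! j < q ! k"
  shows "covers (factor u 0 n) q"
proof -
  have "length q = n" "distinct q" using q unfolding is_perm_def by simp_all
  then have "inj_on (nth q) {..<n}" by (simp add: inj_on_nth)
  then obtain x where x: "\<forall>j<n. \<forall>k<n. (val(0:=x)) j < (val(0:=x)) k \<longleftrightarrow> q ! j < q ! k"
    using extend_order_iso_at_zero[OF _ iso] by blast
  have "\<forall>i<n. \<forall>a. factor u 0 n ! i = Some a \<longrightarrow> (val(0:=x)) i = real a"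
    using length_ge nth_zero by (auto simp: factor_nth val_def)
  then show ?thesis
    using x length_ge \<open>length q = n\<close> \<open>distinct q\<close> by (intro coversI) (simp_all add: length_factor)
qed

lemma later_factor_breaks_first_pattern:
  assumes "1 \<le> i" "i + n \<le> length u"
  shows "\<exists>j\<in>{1..<n}. \<exists>k\<in>{1..<n}. \<not> (val (i + j) < val (i + k) \<longleftrightarrow> val j < val k)"
proof (rule ccontr)
  assume "\<not> ?thesis"
  then have same_pattern: "\<forall>j\<in>{1..<n}. \<forall>k\<in>{1..<n}. val (i + j) < val (i + k) \<longleftrightarrow> val j < val k"
    by blast
  have "inj_on (\<lambda>j. val (i + j)) {..<n}"
  proof (rule inj_onI)
    fix j k assume "j \<in> {..<n}" "k \<in> {..<n}" "val (i + j) = val (i + k)"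
    then show "j = k" using inj_onD[OF inj_on_val[OF assms(2)], of "i + j" "i + k"] assms(1) by simp
  qed
  then obtain q where q: "is_perm n q" and iso: "\<forall>j<n. \<forall>k<n. q ! j < q ! k \<longleftrightarrow> val (i + j) < val (i + k)"
    using exists_perm_order_iso by blast
  have "length q = n" "distinct q" using q unfolding is_perm_def by simp_all
  have "covers (factor u i n) q"
  proof (rule coversI[where r = "\<lambda>j. val (i + j)"])
    show "\<forall>j<length q. \<forall>a. factor u i n ! j = Some a \<longrightarrow> val (i + j) = real a"
      using assms \<open>length q = n\<close> by (auto simp: factor_nth val_def)
  qed (use iso assms \<open>length q = n\<close> \<open>distinct q\<close> in \<open>simp_all add: length_factor\<close>)
  moreover have "covers (factor u 0 n) q"
    using first_factor_covers[OF q] same_pattern iso by auto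
  ultimately have "i = 0"
    using covering_factor_unique[OF q] assms(2) length_ge by simp
  then show False using assms(1) by simp
qed

lemma covering_factor_fits:
  assumes "covers (factor u i n) p" "length p = n" "0 < n"
  shows "i + n \<le> length u"
proof -
  have "min n (length u - i) = n"
    using assms(1,2) unfolding covers_def factor_def by (simp add: min.commute)
  then show ?thesis using assms(3) by linarith
qed

lemma second_factor_covers:
  assumes "3 \<le> n" and p: "is_perm n p"
    and first_pattern: "\<forall>j<n - 1. \<forall>k<n - 1. p ! j < p ! k \<longleftrightarrow> val (j + 1) < val (k + 1)"
    and last_swapped: "p ! (n - 2) < p ! (n - 1) \<longleftrightarrow> \<not> val (n - 2) < val (n - 1)"
  shows "covers (factor u 1 n) p"
proof -
  obtain i where i: "i + n \<le> length u" "covers (factor u i n) p"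
    using ex1_covering_factor[OF p] by blast
  have "i \<noteq> 0"
  proof
    assume "i = 0"
    then have "p ! (n - 2) < p ! (n - 1) \<longleftrightarrow> val (n - 2) < val (n - 1)"
      using covers_factor_less_iff[OF i(2) i(1), of "n - 2" "n - 1"] assms(1) by simp
    then show False using last_swapped by simp
  qed
  moreover have "\<not> 2 \<le> i"
  proof
    assume "2 \<le> i"
    then have "1 \<le> i - 1" "i - 1 + n \<le> length u" using i(1) by simp_all
    then obtain j k where jk: "j \<in> {1..<n}" "k \<in> {1..<n}"
      and breaks: "\<not> (val (i - 1 + j) < val (i - 1 + k) \<longleftrightarrow> val j < val k)"
      by (blast dest: later_factor_breaks_first_pattern)
    have "p ! (j - 1) < p ! (k - 1) \<longleftrightarrow> val (i + (j - 1)) < val (i + (k - 1))"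
      by (rule covers_factor_less_iff[OF i(2) i(1)]) (use jk \<open>2 \<le> i\<close> in auto)
    moreover have "p ! (j - 1) < p ! (k - 1) \<longleftrightarrow> val j < val k"
    proof -
      have "j - 1 < n - 1" "k - 1 < n - 1" "j - 1 + 1 = j" "k - 1 + 1 = k"
        using jk by auto
      then show ?thesis using first_pattern by simp
    qed
    moreover have "i + (j - 1) = i - 1 + j" "i + (k - 1) = i - 1 + k"
      using jk \<open>2 \<le> i\<close> by simp_all
    ultimately show False using breaks by simp
  qed
  ultimately have "i = 1" by linarith
  then show ?thesis using i(2) by simp
qed

lemma perm_with_last_entry:
  assumes "3 \<le> n" and x_fresh: "x \<notin> val ` {1..<n}"
    and x_side: "x < val (n - 1) \<longleftrightarrow> val (n - 2) < val (n - 1)"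
  shows "\<exists>p. is_perm n p \<and> covers (factor u 1 n) p \<and> (p ! (n - 1) < p ! (n - 3) \<longleftrightarrow> x < val (n - 2))"
proof -
  define w where "w j = (if j < n - 1 then val (j + 1) else x)" for j
  have "inj_on w {..<n}"
  proof (rule inj_onI)
    fix j k assume j: "j \<in> {..<n}" and k: "k \<in> {..<n}" and "w j = w k"
    show "j = k"
    proof (cases "j < n - 1"; cases "k < n - 1")
      assume "j < n - 1" "k < n - 1"
      then show "j = k"
        using \<open>w j = w k\<close> inj_onD[OF inj_on_val_first, of "j + 1" "k + 1"] by (simp add: w_def)
    qed (use j k \<open>w j = w k\<close> x_fresh in \<open>auto simp: w_def\<close>)
  qed
  then obtain p where p: "is_perm n p" and iso: "\<forall>j<n. \<forall>k<n. p ! j < p ! k \<longleftrightarrow> w j < w k"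
    using exists_perm_order_iso by blast
  have "n - 2 < n - 1" "n - 2 + 1 = n - 1" using assms(1) by arith+
  then have "w (n - 2) = val (n - 1)" "w (n - 1) = x" by (simp_all add: w_def)
  moreover have "x \<noteq> val (n - 1)" using x_fresh assms(1) by auto
  ultimately have "p ! (n - 2) < p ! (n - 1) \<longleftrightarrow> \<not> val (n - 2) < val (n - 1)"
    using iso[rule_format, of "n - 2" "n - 1"] x_side assms(1) by auto
  moreover have "\<forall>j<n - 1. \<forall>k<n - 1. p ! j < p ! k \<longleftrightarrow> val (j + 1) < val (k + 1)"
    using iso by (simp add: w_def)
  moreover have "p ! (n - 1) < p ! (n - 3) \<longleftrightarrow> x < val (n - 2)"
  proof -
    have "n - 3 < n - 1" "n - 3 + 1 = n - 2" using assms(1) by arith+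
    then have "w (n - 3) = val (n - 2)" by (simp add: w_def)
    then show ?thesis using iso[rule_format, of "n - 1" "n - 3"] \<open>w (n - 1) = x\<close> assms(1) by simp
  qed
  ultimately show ?thesis using p second_factor_covers[OF assms(1) p] by blast
qed

lemma n_less_three: "n < 3"
proof (rule ccontr)
  assume "\<not> n < 3"
  then have "3 \<le> n" by simp
  let ?S = "val ` {1..<n}" and ?a = "val (n - 2)" and ?b = "val (n - 1)"
  have "n - 2 \<in> {1..<n}" "n - 1 \<in> {1..<n}" using \<open>3 \<le> n\<close> by auto
  then have "?a \<noteq> ?b"
    using inj_onD[OF inj_on_val_first] \<open>3 \<le> n\<close> by fastforce
  have "?b \<in> ?S" using \<open>3 \<le> n\<close> by simp
  obtain x1 where x1: "x1 < ?a" "x1 \<notin> ?S" "\<forall>s\<in>?S. s < ?a \<longrightarrow> s < x1"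
    using exists_gap_below[of ?S ?a] by auto
  obtain x2 where x2: "?a < x2" "x2 \<notin> ?S" "\<forall>s\<in>?S. ?a < s \<longrightarrow> x2 < s"
    using exists_gap_above[of ?S ?a] by auto
  have "x1 < ?b \<longleftrightarrow> ?a < ?b" "x2 < ?b \<longleftrightarrow> ?a < ?b"
    using x1 x2 \<open>?b \<in> ?S\<close> \<open>?a \<noteq> ?b\<close> by auto
  then obtain p1 p2 where
    p1: "is_perm n p1" "covers (factor u 1 n) p1" "p1 ! (n - 1) < p1 ! (n - 3) \<longleftrightarrow> x1 < ?a" and
    p2: "is_perm n p2" "covers (factor u 1 n) p2" "p2 ! (n - 1) < p2 ! (n - 3) \<longleftrightarrow> x2 < ?a"
    using perm_with_last_entry[OF \<open>3 \<le> n\<close>] x1(2) x2(2) by meson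
  have "1 + n \<le> length u"
    using covering_factor_fits[OF p1(2)] p1(1) \<open>3 \<le> n\<close> by (simp add: is_perm_def)
  then have "p1 ! (n - 1) < p1 ! (n - 3) \<longleftrightarrow> p2 ! (n - 1) < p2 ! (n - 3)"
    using covers_factor_less_iff[OF p1(2), of "n - 1" "n - 3"]
      covers_factor_less_iff[OF p2(2), of "n - 1" "n - 3"] \<open>3 \<le> n\<close> by simp
  then show False using p1(3) p2(3) x1(1) x2(1) by simp
qed

end

theorem proposition1:
  fixes n :: nat
  assumes "n \<ge> 3"
  shows "\<not> (\<exists>u. upword n u \<and> u \<noteq> [] \<and> hd u = None \<and> (\<forall>x \<in> set (tl u). x \<noteq> None))"
proof
  assume "\<exists>u. upword n u \<and> u \<noteq> [] \<and> hd u = None \<and> (\<forall>x \<in> set (tl u). x \<noteq> None)"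
  then obtain u where "diamond_headed_upword n u"
    by (auto intro: diamond_headed_upword.intro)
  then show False
    using diamond_headed_upword.n_less_three assms by fastforce
qed

end
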